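(* There is a constant $C$ depending only on $n$ such that: if $A\in gl(n,\mathbb{C})$ is a nonzero block diagonal nilpotent matrix each of whose diagonal blocks is in reduced column echelon form, then there exists $S\in Gl(n,\mathbb{C})$ with $\|S^{\pm1}\|\le C(1+\|A\|)^{n!}$ such that $S^{-1}AS$ is in Jordan normal form; moreover $S$ is block diagonal with the same block decomposition as $A$.
   Context: $\|\cdot\|$ is the operator norm. The length of a nonzero column is the row index of its last nonzero entry. A matrix is in column echelon form if column lengths are strictly increasing except for the first columns which may be zero; its pivots are the last nonzero coefficients of its nonzero columns; reduced column echelon form means column echelon form with all pivots equal to $1$. *)

theory Defs
  imports Complex_Main "Jordan_Normal_Form.Jordan_Normal_Form"
begin

definition vnorm :: "complex vec \<Rightarrow> real" where
  "vnorm v = sqrt (\<Sum>i<dim_vec v. (cmod (v $ i))^2)"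

definition opnorm :: "complex mat \<Rightarrow> real" where
  "opnorm A = Sup {vnorm (A *\<^sub>v x) | x. x \<in> carrier_vec (dim_col A) \<and> vnorm x \<le> 1}"

definition nonzero_col :: "'a::zero mat \<Rightarrow> nat \<Rightarrow> bool" where
  "nonzero_col B j = (\<exists>i<dim_row B. B $$ (i,j) \<noteq> 0)"

(* length of a nonzero column: (0-based) row index of its last nonzero entry *)
definition col_len :: "'a::zero mat \<Rightarrow> nat \<Rightarrow> nat" where
  "col_len B j = (GREATEST i. i < dim_row B \<and> B $$ (i,j) \<noteq> 0)"

definition col_echelon :: "'a::zero mat \<Rightarrow> bool" where
  "col_echelon B = (\<exists>z\<le>dim_col B.
      (\<forall>j<z. \<not> nonzero_col B j) \<and>
      (\<forall>j. z \<le> j \<and> j < dim_col B \<longrightarrow> nonzero_col B j) \<and>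
      (\<forall>j j'. z \<le> j \<and> j < j' \<and> j' < dim_col B \<longrightarrow> col_len B j < col_len B j'))"

definition reduced_col_echelon :: "'a::{zero,one} mat \<Rightarrow> bool" where
  "reduced_col_echelon B = (col_echelon B \<and>
      (\<forall>j<dim_col B. nonzero_col B j \<longrightarrow> B $$ (col_len B j, j) = 1))"

definition nilpotent_mat :: "'a::comm_ring_1 mat \<Rightarrow> bool" where
  "nilpotent_mat A = (\<exists>k. A ^\<^sub>m k = 0\<^sub>m (dim_row A) (dim_col A))"

end

theory Submission
  imports Defs
begin

(* Each diagonal block B, say m x m with entries bounded by a, is treated separately.
   In reduced column echelon form, every nonzero column j of B has its last nonzero entry,
   a 1, in some row p j, and nilpotency forces p j < j. So B maps a vector whose last nonzero
   entry is a 1 in row j >= z (the first z columns vanish) to one with the same property in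
   row p j, and kills it if j < z. Starting from the rows t that are not pivots, the vectors
   B^k e_t therefore form Jordan chains, whose pivot rows t, p t, p (p t), ... run through
   every row exactly once. Hence the matrix S of these chains becomes unit upper triangular,
   1 - N, after permuting its columns, and S^-1 is obtained from 1 + N + ... + N^(m-1). The
   entries of B^k e_t are at most (1 + m a)^k, which bounds the entries of S and S^-1 by
   polynomials in a of degree at most (m - 1) m <= n!; entries and operator norm bound each
   other up to factors depending only on n. *)

section \<open>Matrix entries and the operator norm\<close>

lemma norm_index_le_vnorm:
  assumes "i < dim_vec v"
  shows "cmod (v $ i) \<le> vnorm v"
proof -
  have "(cmod (v $ i))\<^sup>2 \<le> (\<Sum>i<dim_vec v. (cmod (v $ i))\<^sup>2)"
    by (rule member_le_sum) (use assms in auto)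
  then show ?thesis
    unfolding vnorm_def by (simp add: real_le_rsqrt)
qed

lemma vnorm_le:
  assumes "\<And>i. i < dim_vec v \<Longrightarrow> cmod (v $ i) \<le> c"
  shows "vnorm v \<le> real (dim_vec v) * c"
proof (cases "dim_vec v = 0")
  case True
  then show ?thesis by (simp add: vnorm_def)
next
  case False
  then have pos: "0 < dim_vec v" by linarith
  then have c: "0 \<le> c" "1 \<le> real (dim_vec v)"
    using order_trans[OF norm_ge_zero assms[OF pos]] by auto
  have "(\<Sum>i<dim_vec v. (cmod (v $ i))\<^sup>2) \<le> (\<Sum>i<dim_vec v. c\<^sup>2)"
    by (rule sum_mono) (use assms in \<open>auto intro: power_mono\<close>)
  also have "\<dots> = real (dim_vec v) * c\<^sup>2" by simp
  also have "\<dots> \<le> (real (dim_vec v) * c)\<^sup>2"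
    using c mult_right_mono[OF c(2), of "real (dim_vec v) * c\<^sup>2"]
    by (simp add: power2_eq_square algebra_simps)
  finally show ?thesis
    unfolding vnorm_def using c by (intro real_le_lsqrt) auto
qed

lemma norm_scalar_prod_le:
  fixes v w :: "'a::real_normed_algebra_1 vec"
  assumes "w \<in> carrier_vec n"
    and v: "\<And>i. i < n \<Longrightarrow> norm (v $ i) \<le> a" and w: "\<And>i. i < n \<Longrightarrow> norm (w $ i) \<le> b"
  shows "norm (v \<bullet> w) \<le> real n * (a * b)"
proof -
  have "norm (v \<bullet> w) \<le> (\<Sum>i<n. norm (v $ i * w $ i))"
    using assms(1) by (auto simp: scalar_prod_def atLeast0LessThan intro: norm_sum)
  also have "\<dots> \<le> (\<Sum>i<n. a * b)"
  proof (rule sum_mono)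
    fix i assume "i \<in> {..<n}"
    then have "norm (v $ i) \<le> a" "norm (w $ i) \<le> b" "0 \<le> a"
      using v w order_trans[OF norm_ge_zero v] by auto
    then show "norm (v $ i * w $ i) \<le> a * b"
      by (meson mult_mono norm_ge_zero norm_mult_ineq order_trans)
  qed
  finally show ?thesis by simp
qed

lemma norm_mult_mat_vec_index_le:
  fixes A :: "'a::real_normed_algebra_1 mat"
  assumes "A \<in> carrier_mat nr n" "v \<in> carrier_vec n" "i < nr"
    and "\<And>i j. i < nr \<Longrightarrow> j < n \<Longrightarrow> norm (A $$ (i,j)) \<le> a"
    and "\<And>j. j < n \<Longrightarrow> norm (v $ j) \<le> b"
  shows "norm ((A *\<^sub>v v) $ i) \<le> real n * (a * b)"
  using assms by (auto intro!: norm_scalar_prod_le)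

lemma norm_mult_mat_index_le:
  fixes A :: "'a::real_normed_algebra_1 mat"
  assumes "A \<in> carrier_mat nr n" "C \<in> carrier_mat n nc" "i < nr" "j < nc"
    and "\<And>i k. i < nr \<Longrightarrow> k < n \<Longrightarrow> norm (A $$ (i,k)) \<le> a"
    and "\<And>k j. k < n \<Longrightarrow> j < nc \<Longrightarrow> norm (C $$ (k,j)) \<le> b"
  shows "norm ((A * C) $$ (i,j)) \<le> real n * (a * b)"
  using assms by (auto intro!: norm_scalar_prod_le)

lemma vnorm_mult_mat_vec_le:
  assumes M: "M \<in> carrier_mat n n" and E: "\<And>i j. i < n \<Longrightarrow> j < n \<Longrightarrow> cmod (M $$ (i,j)) \<le> E"
    and x: "x \<in> carrier_vec n" "vnorm x \<le> 1"
  shows "vnorm (M *\<^sub>v x) \<le> real n * (real n * E)"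
proof -
  have "cmod (x $ j) \<le> 1" if "j < n" for j
    using norm_index_le_vnorm[of j x] x that by auto
  then have "cmod ((M *\<^sub>v x) $ i) \<le> real n * E" if "i < n" for i
    using norm_mult_mat_vec_index_le[OF M x(1) that E, of 1] by simp
  then show ?thesis
    using vnorm_le[of "M *\<^sub>v x"] M by simp
qed

lemma opnorm_le:
  assumes M: "M \<in> carrier_mat n n" and E: "\<forall>x\<in>elements_mat M. cmod x \<le> E"
  shows "opnorm M \<le> real n * (real n * E)"
  unfolding opnorm_def
proof (rule cSup_least)
  show "{vnorm (M *\<^sub>v x) |x. x \<in> carrier_vec (dim_col M) \<and> vnorm x \<le> 1} \<noteq> {}"
    by (auto intro!: exI[of _ "0\<^sub>v (dim_col M)"] simp: vnorm_def)
  have "cmod (M $$ (i,j)) \<le> E" if "i < n" "j < n" for i j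
    using E elements_matI[OF M that refl] by blast
  then show "y \<le> real n * (real n * E)"
    if "y \<in> {vnorm (M *\<^sub>v x) |x. x \<in> carrier_vec (dim_col M) \<and> vnorm x \<le> 1}" for y
    using vnorm_mult_mat_vec_le[OF M] M that by auto
qed

lemma vnorm_le_opnorm:
  assumes M: "M \<in> carrier_mat n n" and x: "x \<in> carrier_vec n" "vnorm x \<le> 1"
  shows "vnorm (M *\<^sub>v x) \<le> opnorm M"
proof -
  let ?E = "\<Sum>(i,j)\<in>{..<n} \<times> {..<n}. cmod (M $$ (i,j))"
  have "cmod (M $$ (i,j)) \<le> ?E" if "i < n" "j < n" for i j
    using member_le_sum[of "(i,j)" "{..<n} \<times> {..<n}" "\<lambda>(i,j). cmod (M $$ (i,j))"] that
    by auto
  then have "bdd_above {vnorm (M *\<^sub>v x) |x. x \<in> carrier_vec (dim_col M) \<and> vnorm x \<le> 1}"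
    using vnorm_mult_mat_vec_le[OF M] M unfolding bdd_above_def by blast
  then show ?thesis
    unfolding opnorm_def by (rule cSup_upper[rotated]) (use M x in auto)
qed

lemma opnorm_nonneg:
  assumes "M \<in> carrier_mat n n"
  shows "0 \<le> opnorm M"
proof -
  have "M *\<^sub>v 0\<^sub>v n = 0\<^sub>v n"
    using assms by (intro eq_vecI) auto
  then have "0 = vnorm (M *\<^sub>v 0\<^sub>v n)"
    by (simp add: vnorm_def)
  also have "\<dots> \<le> opnorm M"
    by (rule vnorm_le_opnorm[OF assms]) (auto simp: vnorm_def)
  finally show ?thesis .
qed

lemma vnorm_unit_vec: "j < n \<Longrightarrow> vnorm (unit_vec n j) = 1"
proof -
  assume j: "j < n"
  have "(\<Sum>k<n. (cmod (unit_vec n j $ k :: complex))\<^sup>2) = (\<Sum>k<n. if k = j then 1 else 0)"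
    by (rule sum.cong) (use j in auto)
  then show ?thesis
    unfolding vnorm_def using j by simp
qed

lemma norm_index_le_opnorm:
  assumes M: "M \<in> carrier_mat n n" and i: "i < n" and j: "j < n"
  shows "cmod (M $$ (i,j)) \<le> opnorm M"
proof -
  have "cmod (M $$ (i,j)) = cmod ((M *\<^sub>v unit_vec n j) $ i)"
    using M i j by simp
  also have "\<dots> \<le> vnorm (M *\<^sub>v unit_vec n j)"
    using M i by (intro norm_index_le_vnorm) auto
  also have "\<dots> \<le> opnorm M"
    using vnorm_unit_vec[OF j] by (intro vnorm_le_opnorm[OF M]) auto
  finally show ?thesis .
qed

section \<open>Inverting unit upper triangular matrices\<close>

lemma strictly_upper_triangular_pow_index:
  fixes N :: "'a::semiring_1 mat"
  assumes N: "N \<in> carrier_mat n n" and upper: "\<And>i j. j \<le> i \<Longrightarrow> i < n \<Longrightarrow> N $$ (i,j) = 0"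
    and "i < n" "j < n" "j < i + k"
  shows "(N ^\<^sub>m k) $$ (i,j) = 0"
  using assms(3-)
proof (induct k arbitrary: j)
  case 0
  then show ?case using N by simp
next
  case (Suc k)
  have "(N ^\<^sub>m Suc k) $$ (i,j) = (\<Sum>l\<in>{0..<n}. (N ^\<^sub>m k) $$ (i,l) * N $$ (l,j))"
    using Suc.prems N by (simp add: scalar_prod_def)
  also have "\<dots> = 0"
  proof (intro sum.neutral ballI)
    fix l assume "l \<in> {0..<n}"
    then show "(N ^\<^sub>m k) $$ (i,l) * N $$ (l,j) = 0"
      by (cases "l < i + k") (use Suc upper[of j l] in auto)
  qed
  finally show ?case .
qed

lemma strictly_upper_triangular_nilpotent:
  fixes N :: "'a::semiring_1 mat"
  assumes N: "N \<in> carrier_mat n n" and upper: "\<And>i j. j \<le> i \<Longrightarrow> i < n \<Longrightarrow> N $$ (i,j) = 0"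
  shows "N ^\<^sub>m n = 0\<^sub>m n n"
  using strictly_upper_triangular_pow_index[OF assms] N by (intro eq_matI) auto

primrec geom_sum_mat :: "nat \<Rightarrow> 'a::semiring_1 mat \<Rightarrow> nat \<Rightarrow> 'a mat" where
  "geom_sum_mat n N 0 = 0\<^sub>m n n"
| "geom_sum_mat n N (Suc k) = 1\<^sub>m n + geom_sum_mat n N k * N"

lemma dim_row_geom_sum_mat [simp]: "dim_row (geom_sum_mat n N k) = n"
  by (induct k) auto

lemma geom_sum_mat_carrier [simp]: "N \<in> carrier_mat n n \<Longrightarrow> geom_sum_mat n N k \<in> carrier_mat n n"
  by (induct k) auto

lemma mult_geom_sum_mat:
  fixes N :: "'a::ring_1 mat"
  assumes N: "N \<in> carrier_mat n n"
  shows "(1\<^sub>m n - N) * geom_sum_mat n N k = 1\<^sub>m n - N ^\<^sub>m k"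
proof (induct k)
  case 0
  then show ?case using N by (intro eq_matI) auto
next
  case (Suc k)
  let ?G = "geom_sum_mat n N k"
  have G: "?G \<in> carrier_mat n n" using N by simp
  have "(1\<^sub>m n - N) * geom_sum_mat n N (Suc k) = (1\<^sub>m n - N) + (1\<^sub>m n - N) * (?G * N)"
    using mult_add_distrib_mat[of "1\<^sub>m n - N" n n "1\<^sub>m n" n "?G * N"] N G
    by (simp add: minus_carrier_mat)
  moreover have "(1\<^sub>m n - N) * (?G * N) = ((1\<^sub>m n - N) * ?G) * N"
    by (rule assoc_mult_mat[symmetric, of _ n n _ n _ n]) (use N G in auto)
  moreover have "\<dots> = (1\<^sub>m n - N ^\<^sub>m k) * N"
    by (simp only: Suc)
  moreover have "\<dots> = N - N ^\<^sub>m Suc k"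
    using N by (simp add: minus_mult_distrib_mat[of _ n n])
  ultimately show ?case
    using N by (intro eq_matI) auto
qed

lemma norm_geom_sum_mat_index_le:
  fixes N :: "'a::real_normed_algebra_1 mat"
  assumes N: "N \<in> carrier_mat n n" and b: "\<And>i j. i < n \<Longrightarrow> j < n \<Longrightarrow> norm (N $$ (i,j)) \<le> b"
    and "0 \<le> b" "i < n" "j < n"
  shows "norm (geom_sum_mat n N k $$ (i,j)) \<le> (1 + real n * b) ^ k"
  using assms(4,5)
proof (induct k arbitrary: i j)
  case 0
  then show ?case by simp
next
  case (Suc k)
  let ?X = "1 + real n * b"
  have "norm ((geom_sum_mat n N k * N) $$ (i,j)) \<le> real n * (?X ^ k * b)"
    using Suc by (intro norm_mult_mat_index_le[of _ n n _ n] b) (auto simp: N)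
  moreover have "norm (1\<^sub>m n $$ (i,j) :: 'a) \<le> 1"
    using Suc.prems by simp
  moreover have "1 \<le> ?X ^ k"
    using \<open>0 \<le> b\<close> by simp
  moreover have "geom_sum_mat n N (Suc k) $$ (i,j) = 1\<^sub>m n $$ (i,j) + (geom_sum_mat n N k * N) $$ (i,j)"
    unfolding geom_sum_mat.simps by (rule index_add_mat(1)) (use Suc.prems N in auto)
  then have "norm (geom_sum_mat n N (Suc k) $$ (i,j)) \<le>
      norm (1\<^sub>m n $$ (i,j) :: 'a) + norm ((geom_sum_mat n N k * N) $$ (i,j))"
    by (simp only: norm_triangle_ineq)
  ultimately have "norm (geom_sum_mat n N (Suc k) $$ (i,j)) \<le> 1 + real n * (?X ^ k * b)"
    by linarith
  also have "\<dots> \<le> ?X ^ k + real n * b * ?X ^ k"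
    using \<open>1 \<le> ?X ^ k\<close> by simp
  finally show ?case by (simp add: algebra_simps)
qed

section \<open>Block diagonal matrices and Jordan chains\<close>

(* Listing the chains t \<in> ts one after another, each in the order B^(L t - 1) v_t, ..., B v_t, v_t
   that matches the superdiagonal of a Jordan block, column c holds B^k v_t for
   (t, k) = chain_index L ts c. *)
fun chain_index :: "('t \<Rightarrow> nat) \<Rightarrow> 't list \<Rightarrow> nat \<Rightarrow> 't \<times> nat" where
  "chain_index L [] c = undefined"
| "chain_index L (t # ts) c = (if c < L t then (t, L t - 1 - c) else chain_index L ts (c - L t))"

lemma chain_index_mem:
  "c < sum_list (map L ts) \<Longrightarrow> fst (chain_index L ts c) \<in> set ts \<and> snd (chain_index L ts c) < L (fst (chain_index L ts c))"
  by (induct ts arbitrary: c) auto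

lemma chain_index_0: "0 < sum_list (map L ts) \<Longrightarrow> Suc (snd (chain_index L ts 0)) = L (fst (chain_index L ts 0))"
  by (induct ts) auto

lemma chain_index_Suc:
  assumes "c < sum_list (map L ts)" "chain_index L ts c = (t, k)" "Suc k < L t"
  shows "0 < c \<and> chain_index L ts (c - 1) = (t, Suc k)"
  using assms
proof (induct ts arbitrary: c)
  case (Cons t' ts)
  show ?case
  proof (cases "c < L t'")
    case False
    then have "0 < c - L t' \<and> chain_index L ts (c - L t' - 1) = (t, Suc k)"
      using Cons.hyps[of "c - L t'"] Cons.prems by auto
    then show ?thesis using False by (auto simp: diff_diff_add add.commute)
  qed (use Cons.prems in auto)
qed simp

lemma inj_on_chain_index:
  assumes "distinct ts"
  shows "inj_on (chain_index L ts) {..<sum_list (map L ts)}"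
  using assms
proof (induct ts)
  case (Cons t ts)
  show ?case
  proof (rule inj_onI)
    fix c c' assume c: "c \<in> {..<sum_list (map L (t # ts))}" and c': "c' \<in> {..<sum_list (map L (t # ts))}"
      and eq: "chain_index L (t # ts) c = chain_index L (t # ts) c'"
    have "fst (chain_index L ts (c - L t)) \<in> set ts" if "\<not> c < L t"
      using chain_index_mem[of "c - L t" L ts] c that by auto
    moreover have "fst (chain_index L ts (c' - L t)) \<in> set ts" if "\<not> c' < L t"
      using chain_index_mem[of "c' - L t" L ts] c' that by auto
    ultimately show "c = c'"
      using Cons c c' eq by (auto split: if_splits dest: inj_onD) (metis fst_conv)
  qed
qed simp

lemma chain_index_surj:
  "x \<in> (SIGMA t:set ts. {..<L t}) \<Longrightarrow> x \<in> chain_index L ts ` {..<sum_list (map L ts)}"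
proof (induct ts)
  case (Cons t' ts)
  then obtain t k where x: "x = (t, k)" "t \<in> set (t' # ts)" "k < L t" by auto
  show ?case
  proof (cases "t = t'")
    case True
    then show ?thesis using x by (auto intro!: image_eqI[of _ _ "L t - 1 - k"])
  next
    case False
    then obtain c where "c < sum_list (map L ts)" "chain_index L ts c = x"
      using Cons x by auto
    then show ?thesis by (auto intro!: image_eqI[of _ _ "c + L t'"])
  qed
qed simp

lemma bij_betw_chain_index:
  assumes "distinct ts"
  shows "bij_betw (chain_index L ts) {..<sum_list (map L ts)} (SIGMA t:set ts. {..<L t})"
  unfolding bij_betw_def
proof (intro conjI equalityI subsetI inj_on_chain_index[OF assms] chain_index_surj)
  fix x assume "x \<in> chain_index L ts ` {..<sum_list (map L ts)}"
  then show "x \<in> (SIGMA t:set ts. {..<L t})"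
    using chain_index_mem[of _ L ts] by (metis SigmaI imageE lessThan_iff prod.collapse)
qed

lemma index_jordan_matrix_chain_index:
  assumes "i < sum_list (map L ts)" "j < sum_list (map L ts)"
  shows "jordan_matrix (map (\<lambda>t. (L t, 0::'a::{zero,one})) ts) $$ (i,j) =
    (if Suc i = j \<and> Suc (snd (chain_index L ts j)) < L (fst (chain_index L ts j)) then 1 else 0)"
  using assms
proof (induct ts arbitrary: i j)
  case (Cons t ts)
  let ?R = "jordan_matrix (map (\<lambda>t. (L t, 0::'a)) ts)"
  have dims: "dim_row ?R = sum_list (map L ts)" "dim_col ?R = sum_list (map L ts)"
    by (simp_all add: o_def)
  have "jordan_matrix (map (\<lambda>t. (L t, 0::'a)) (t # ts)) $$ (i,j) =
      four_block_mat (jordan_block (L t) 0) (0\<^sub>m (L t) (sum_list (map L ts)))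
        (0\<^sub>m (sum_list (map L ts)) (L t)) ?R $$ (i,j)"
    unfolding jordan_matrix_def by (simp add: Let_def o_def dim_diag_block_mat)
  also have "\<dots> = (if i < L t then if j < L t then jordan_block (L t) (0::'a) $$ (i,j) else 0
      else if j < L t then 0 else ?R $$ (i - L t, j - L t))"
    using Cons.prems by (subst index_mat_four_block) (auto simp: dims o_def)
  finally show ?case
    using Cons.prems Cons.hyps[of "i - L t" "j - L t"] chain_index_0[of L ts] by auto
qed simp

lemma elements_mat_subset_diag_block_mat:
  "B \<in> set Bs \<Longrightarrow> elements_mat B \<subseteq> elements_mat (diag_block_mat Bs)"
proof (induct Bs)
  case (Cons A As)
  let ?D = "diag_block_mat As"
  let ?M = "diag_block_mat (A # As)"
  have M: "?M = four_block_mat A (0\<^sub>m (dim_row A) (dim_col ?D)) (0\<^sub>m (dim_row ?D) (dim_col A)) ?D"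
    by (simp add: Let_def)
  have carrier: "?M \<in> carrier_mat (dim_row A + dim_row ?D) (dim_col A + dim_col ?D)"
    unfolding M by (intro carrier_matI) simp_all
  have "elements_mat A \<subseteq> elements_mat ?M"
  proof
    fix x assume "x \<in> elements_mat A"
    then obtain i j where ij: "i < dim_row A" "j < dim_col A" "x = A $$ (i,j)" by blast
    have "?M $$ (i,j) = A $$ (i,j)"
      unfolding M using ij by (subst index_mat_four_block) auto
    then show "x \<in> elements_mat ?M"
      using ij by (intro elements_matI[OF carrier, of i j]) auto
  qed
  moreover have "elements_mat ?D \<subseteq> elements_mat ?M"
  proof
    fix x assume "x \<in> elements_mat ?D"
    then obtain i j where ij: "i < dim_row ?D" "j < dim_col ?D" "x = ?D $$ (i,j)" by blast
    have "?M $$ (dim_row A + i, dim_col A + j) = ?D $$ (i,j)"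
      unfolding M using ij by (subst index_mat_four_block) auto
    then show "x \<in> elements_mat ?M"
      using ij by (intro elements_matI[OF carrier, of "dim_row A + i" "dim_col A + j"]) auto
  qed
  ultimately show ?case
    using Cons set_ConsD[OF Cons.prems] by (metis subset_trans)
qed simp

lemma similar_mat_wit_diag_block_mat:
  fixes As :: "'a::comm_ring_1 mat list"
  assumes "\<And>A. A \<in> set As \<Longrightarrow> similar_mat_wit A (B A) (P A) (Q A)"
  shows "similar_mat_wit (diag_block_mat As) (diag_block_mat (map B As))
    (diag_block_mat (map P As)) (diag_block_mat (map Q As))"
  using assms
proof (induct As)
  case Nil
  show ?case by (auto simp: similar_mat_wit_def)
next
  case (Cons A As)
  let ?n = "dim_row A" and ?D = "diag_block_mat As"
  let ?k = "dim_row ?D"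
  let ?B = "diag_block_mat (map B As)" and ?P = "diag_block_mat (map P As)"
    and ?Q = "diag_block_mat (map Q As)"
  have wA: "similar_mat_wit A (B A) (P A) (Q A)"
    using Cons.prems by simp
  have wD: "similar_mat_wit ?D ?B ?P ?Q"
    by (rule Cons.hyps) (use Cons.prems in simp)
  note A = similar_mat_witD(4-7)[OF refl wA] and D = similar_mat_witD(4-7)[OF refl wD]
  have "0\<^sub>m ?n ?k = P A * 0\<^sub>m ?n ?k * ?Q"
    using right_mult_zero_mat[OF A(3), of ?k] left_mult_zero_mat[OF D(4), of ?n] by simp
  moreover have "0\<^sub>m ?k ?n = ?P * 0\<^sub>m ?k ?n * Q A"
    using right_mult_zero_mat[OF D(3), of ?n] left_mult_zero_mat[OF A(4), of ?k] by simp
  ultimately have "similar_mat_wit (four_block_mat A (0\<^sub>m ?n ?k) (0\<^sub>m ?k ?n) ?D)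
      (four_block_mat (B A) (0\<^sub>m ?n ?k) (0\<^sub>m ?k ?n) ?B)
      (four_block_mat (P A) (0\<^sub>m ?n ?k) (0\<^sub>m ?k ?n) ?P)
      (four_block_mat (Q A) (0\<^sub>m ?n ?k) (0\<^sub>m ?k ?n) ?Q)"
    by (intro similar_mat_wit_four_block[OF wA wD _ _ A(1) D(1)]) auto
  moreover note A(2-4)[THEN carrier_matD(1)] and D(2-4)[THEN carrier_matD(1)]
    and A[THEN carrier_matD(2)] and D[THEN carrier_matD(2)]
  ultimately show ?case
    unfolding list.map diag_block_mat.simps Let_def by (simp only:)
qed

section \<open>Jordan chains of nilpotent matrices with unit pivots\<close>

definition unit_pivot :: "'a::{zero,one} vec \<Rightarrow> nat \<Rightarrow> bool" where
  "unit_pivot v j \<longleftrightarrow> j < dim_vec v \<and> v $ j = 1 \<and> (\<forall>i. j < i \<and> i < dim_vec v \<longrightarrow> v $ i = 0)"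

(* For a reduced column echelon matrix, p is col_len and the first z columns are its zero
   columns; nilpotency is what forces p j < j. *)
locale nilpotent_echelon =
  fixes B :: "'a::field mat" and m z :: nat and p :: "nat \<Rightarrow> nat"
  assumes carrier: "B \<in> carrier_mat m m"
    and zero_col: "\<And>i j. j < z \<Longrightarrow> i < m \<Longrightarrow> B $$ (i,j) = 0"
    and pivot_less: "\<And>j. z \<le> j \<Longrightarrow> j < m \<Longrightarrow> p j < j"
    and pivot_one: "\<And>j. z \<le> j \<Longrightarrow> j < m \<Longrightarrow> B $$ (p j, j) = 1"
    and below_pivot: "\<And>i j. z \<le> j \<Longrightarrow> j < m \<Longrightarrow> p j < i \<Longrightarrow> i < m \<Longrightarrow> B $$ (i,j) = 0"
    and pivot_mono: "\<And>j j'. z \<le> j \<Longrightarrow> j < j' \<Longrightarrow> j' < m \<Longrightarrow> p j < p j'"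
begin

lemma index_mult_unit_pivot:
  assumes v: "unit_pivot v j" "dim_vec v = m" and j: "z \<le> j" and i: "i < m" "p j \<le> i"
  shows "(B *\<^sub>v v) $ i = B $$ (i,j)"
proof -
  have rest: "(\<Sum>l\<in>{0..<m} - {j}. B $$ (i,l) * v $ l) = 0"
  proof (intro sum.neutral ballI)
    fix l assume l: "l \<in> {0..<m} - {j}"
    consider "j < l" | "l < z" | "z \<le> l" "l < j"
      using l by force
    then show "B $$ (i,l) * v $ l = 0"
    proof cases
      case 3
      then have "p l < p j"
        using pivot_mono v by (auto simp: unit_pivot_def)
      then show ?thesis
        using below_pivot[of l i] 3 l i by auto
    qed (use v l zero_col i in \<open>auto simp: unit_pivot_def\<close>)
  qed
  have "(B *\<^sub>v v) $ i = (\<Sum>l\<in>{0..<m}. B $$ (i,l) * v $ l)"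
    using carrier v i by (auto simp: scalar_prod_def)
  also have "\<dots> = B $$ (i,j) * v $ j + (\<Sum>l\<in>{0..<m} - {j}. B $$ (i,l) * v $ l)"
    using v by (intro sum.remove) (auto simp: unit_pivot_def)
  finally show ?thesis
    using rest v by (simp add: unit_pivot_def)
qed

lemma unit_pivot_mult:
  assumes v: "unit_pivot v j" "dim_vec v = m" and j: "z \<le> j"
  shows "unit_pivot (B *\<^sub>v v) (p j)"
proof -
  have "j < m" using v by (simp add: unit_pivot_def)
  then show ?thesis
    using index_mult_unit_pivot[OF v j] pivot_one[OF j] below_pivot[OF j] pivot_less[OF j] carrier
    unfolding unit_pivot_def by auto
qed

lemma mult_unit_pivot_eq_0:
  assumes v: "unit_pivot v j" "dim_vec v = m" and j: "j < z"
  shows "B *\<^sub>v v = 0\<^sub>v m"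
proof (rule eq_vecI)
  fix i assume "i < dim_vec (0\<^sub>v m :: 'a vec)"
  then have "(B *\<^sub>v v) $ i = (\<Sum>l\<in>{0..<m}. B $$ (i,l) * v $ l)"
    using carrier v by (auto simp: scalar_prod_def)
  also have "\<dots> = 0"
  proof (intro sum.neutral ballI)
    fix l assume "l \<in> {0..<m}"
    then show "B $$ (i,l) * v $ l = 0"
      by (cases "l \<le> j") (use v j zero_col \<open>i < dim_vec (0\<^sub>v m)\<close> in \<open>auto simp: unit_pivot_def\<close>)
  qed
  finally show "(B *\<^sub>v v) $ i = 0\<^sub>v m $ i"
    using \<open>i < dim_vec (0\<^sub>v m)\<close> by simp
qed (use carrier in auto)

primrec chain_vec :: "nat \<Rightarrow> nat \<Rightarrow> 'a vec" where
  "chain_vec t 0 = unit_vec m t"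
| "chain_vec t (Suc k) = B *\<^sub>v chain_vec t k"

lemma dim_chain_vec [simp]: "dim_vec (chain_vec t k) = m"
  using carrier by (induct k) auto

lemma pivot_iter_add_le:
  "t < m \<Longrightarrow> \<forall>k'<k. z \<le> (p ^^ k') t \<Longrightarrow> (p ^^ k) t + k \<le> t"
proof (induct k)
  case (Suc k)
  then have "(p ^^ k) t + k \<le> t" "z \<le> (p ^^ k) t" by auto
  then show ?case using pivot_less[of "(p ^^ k) t"] Suc.prems by simp
qed simp

lemma unit_pivot_chain_vec_iter:
  "t < m \<Longrightarrow> \<forall>k'<k. z \<le> (p ^^ k') t \<Longrightarrow> unit_pivot (chain_vec t k) ((p ^^ k) t)"
proof (induct k)
  case 0
  then show ?case by (auto simp: unit_pivot_def)
next
  case (Suc k)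
  then show ?case using unit_pivot_mult[of "chain_vec t k" "(p ^^ k) t"] by simp
qed

definition chain_len :: "nat \<Rightarrow> nat" where
  "chain_len t = Suc (LEAST k. (p ^^ k) t < z)"

lemma pivot_iter_exit:
  assumes "t < m"
  shows "\<exists>k. (p ^^ k) t < z"
proof (rule ccontr)
  assume "\<not> ?thesis"
  then have "\<forall>k'<Suc t. z \<le> (p ^^ k') t"
    by (simp add: not_less)
  from pivot_iter_add_le[OF assms this] show False
    by simp
qed

lemma pivot_iter_ge: "k < chain_len t - 1 \<Longrightarrow> z \<le> (p ^^ k) t"
  unfolding chain_len_def using not_less_Least by fastforce

lemma pivot_iter_chain_len: "t < m \<Longrightarrow> (p ^^ (chain_len t - 1)) t < z"
  unfolding chain_len_def using LeastI_ex[OF pivot_iter_exit] by auto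

lemma unit_pivot_chain_vec: "t < m \<Longrightarrow> k < chain_len t \<Longrightarrow> unit_pivot (chain_vec t k) ((p ^^ k) t)"
  by (rule unit_pivot_chain_vec_iter) (auto intro: pivot_iter_ge)

lemma pivot_iter_le: "t < m \<Longrightarrow> k < chain_len t \<Longrightarrow> (p ^^ k) t + k \<le> t"
  by (rule pivot_iter_add_le) (auto intro: pivot_iter_ge)

lemma chain_vec_chain_len: "t < m \<Longrightarrow> chain_vec t (chain_len t) = 0\<^sub>v m"
  using mult_unit_pivot_eq_0[OF unit_pivot_chain_vec _ pivot_iter_chain_len]
  by (simp add: chain_len_def)

(* Each row that is not a pivot starts a Jordan chain. *)
definition chain_starts :: "nat set" where
  "chain_starts = {..<m} - p ` {z..<m}"

lemma pivot_iter_inj: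
  "a < m \<Longrightarrow> b < m \<Longrightarrow> \<forall>k'<k. z \<le> (p ^^ k') a \<and> z \<le> (p ^^ k') b \<Longrightarrow>
    (p ^^ k) a = (p ^^ k) b \<Longrightarrow> a = b"
proof (induct k arbitrary: a b)
  case (Suc k)
  have z: "z \<le> a" "z \<le> b"
    using Suc.prems(3) by auto
  have "(p ^^ k) (p a) = (p ^^ k) (p b)"
    using Suc.prems(4) by (simp add: funpow_Suc_right del: funpow.simps)
  moreover have "\<forall>k'<k. z \<le> (p ^^ k') (p a) \<and> z \<le> (p ^^ k') (p b)"
  proof (intro allI impI)
    fix k' assume "k' < k"
    moreover have "(p ^^ k') (p a) = (p ^^ Suc k') a" "(p ^^ k') (p b) = (p ^^ Suc k') b"
      by (simp_all only: funpow_Suc_right o_apply)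
    ultimately show "z \<le> (p ^^ k') (p a) \<and> z \<le> (p ^^ k') (p b)"
      using Suc.prems(3) by auto
  qed
  moreover have "p a < m" "p b < m"
    using pivot_less z Suc.prems(1,2) by (meson order.strict_trans)+
  ultimately have "p a = p b"
    using Suc.hyps by blast
  then show ?case
    using pivot_mono z Suc.prems(1,2) by (metis less_irrefl nat_neq_iff)
qed simp

lemma pivot_iter_not_start:
  assumes "t < m" "0 < k" "k < chain_len t"
  shows "(p ^^ k) t \<notin> chain_starts"
proof -
  have "(p ^^ k) t = p ((p ^^ (k - 1)) t)"
    using assms(2) by (metis Suc_diff_1 funpow.simps(2) o_apply)
  moreover have "z \<le> (p ^^ (k - 1)) t"
    using assms by (intro pivot_iter_ge) auto
  moreover have "(p ^^ (k - 1)) t < m"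
    using pivot_iter_le[OF assms(1), of "k - 1"] assms by linarith
  ultimately show ?thesis
    by (auto simp: chain_starts_def)
qed

lemma pivot_iter_eq_imp:
  assumes t: "t \<in> chain_starts" and t': "t' \<in> chain_starts"
    and k: "k < chain_len t" and k': "k' < chain_len t'" and "k \<le> k'"
    and eq: "(p ^^ k) t = (p ^^ k') t'"
  shows "t = t' \<and> k = k'"
proof -
  have tm: "t < m" "t' < m" using t t' by (auto simp: chain_starts_def)
  define u where "u = (p ^^ (k' - k)) t'"
  have eq': "(p ^^ k') t' = (p ^^ k) u"
    unfolding u_def by (metis funpow_add o_apply le_add_diff_inverse \<open>k \<le> k'\<close>)
  have u: "u < m"
    using pivot_iter_le[OF tm(2), of "k' - k"] tm k' unfolding u_def by linarith
  have ge: "\<forall>k''<k. z \<le> (p ^^ k'') t \<and> z \<le> (p ^^ k'') u"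
  proof (intro allI impI conjI)
    fix k'' assume "k'' < k"
    then show "z \<le> (p ^^ k'') t"
      using k by (intro pivot_iter_ge) auto
    have "(p ^^ k'') u = (p ^^ (k'' + (k' - k))) t'"
      unfolding u_def funpow_add by simp
    also have "z \<le> \<dots>"
      using \<open>k'' < k\<close> \<open>k \<le> k'\<close> k' by (intro pivot_iter_ge) auto
    finally show "z \<le> (p ^^ k'') u" .
  qed
  have tu: "t = u"
    using pivot_iter_inj[OF tm(1) u ge] eq eq' by simp
  have "k' - k = 0"
  proof (rule ccontr)
    assume "k' - k \<noteq> 0"
    then have "u \<notin> chain_starts"
      unfolding u_def using k' by (intro pivot_iter_not_start[OF tm(2)]) auto
    then show False
      using t tu by simp
  qed
  then show ?thesis
    using tu \<open>k \<le> k'\<close> unfolding u_def by auto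
qed

lemma pivot_iter_surj: "i < m \<Longrightarrow> \<exists>t\<in>chain_starts. \<exists>k<chain_len t. (p ^^ k) t = i"
proof (induction "m - i" arbitrary: i rule: less_induct)
  case less
  show ?case
  proof (cases "i \<in> chain_starts")
    case True
    then show ?thesis by (intro bexI[of _ i] exI[of _ 0]) (auto simp: chain_len_def)
  next
    case False
    then obtain j where j: "z \<le> j" "j < m" "p j = i"
      using less.prems unfolding chain_starts_def by auto
    then have "m - j < m - i"
      using pivot_less by fastforce
    then obtain t k where t: "t \<in> chain_starts" "k < chain_len t" "(p ^^ k) t = j"
      using less.hyps[of j] j by auto
    have "Suc k < chain_len t"
    proof (rule ccontr)
      assume "\<not> Suc k < chain_len t"
      then have "k = chain_len t - 1" using t by auto
      then show False
        using pivot_iter_chain_len[of t] t j by (auto simp: chain_starts_def)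
    qed
    then show ?thesis
      using t j by (intro bexI[of _ t] exI[of _ "Suc k"]) auto
  qed
qed

lemma bij_betw_pivot_iter:
  "bij_betw (\<lambda>(t, k). (p ^^ k) t) (SIGMA t:chain_starts. {..<chain_len t}) {..<m}"
proof (rule bij_betw_imageI)
  show "inj_on (\<lambda>(t, k). (p ^^ k) t) (SIGMA t:chain_starts. {..<chain_len t})"
  proof (rule inj_onI)
    fix x y assume x: "x \<in> (SIGMA t:chain_starts. {..<chain_len t})"
      and y: "y \<in> (SIGMA t:chain_starts. {..<chain_len t})"
      and eq: "(case x of (t, k) \<Rightarrow> (p ^^ k) t) = (case y of (t, k) \<Rightarrow> (p ^^ k) t)"
    obtain t k t' k' where xy: "x = (t, k)" "y = (t', k')"
      by fastforce
    show "x = y"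
      using x y eq pivot_iter_eq_imp[of t t' k k'] pivot_iter_eq_imp[of t' t k' k]
      unfolding xy by (cases "k \<le> k'") auto
  qed
  show "(\<lambda>(t, k). (p ^^ k) t) ` (SIGMA t:chain_starts. {..<chain_len t}) = {..<m}"
  proof
    show "(\<lambda>(t, k). (p ^^ k) t) ` (SIGMA t:chain_starts. {..<chain_len t}) \<subseteq> {..<m}"
      using pivot_iter_le by (fastforce simp: chain_starts_def)
    show "{..<m} \<subseteq> (\<lambda>(t, k). (p ^^ k) t) ` (SIGMA t:chain_starts. {..<chain_len t})"
    proof
      fix i assume "i \<in> {..<m}"
      then obtain t k where "t \<in> chain_starts" "k < chain_len t" "(p ^^ k) t = i"
        using pivot_iter_surj by blast
      then show "i \<in> (\<lambda>(t, k). (p ^^ k) t) ` (SIGMA t:chain_starts. {..<chain_len t})"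
        by (auto intro!: image_eqI[of _ _ "(t, k)"])
    qed
  qed
qed

definition starts :: "nat list" where
  "starts = sorted_list_of_set chain_starts"

definition chain_pos :: "nat \<Rightarrow> nat \<times> nat" where
  "chain_pos = chain_index chain_len starts"

definition pivot_row :: "nat \<Rightarrow> nat" where
  "pivot_row c = (case chain_pos c of (t, k) \<Rightarrow> (p ^^ k) t)"

lemma set_starts: "set starts = chain_starts"
  unfolding starts_def chain_starts_def by simp

lemma bij_betw_chain_pos_sum:
  "bij_betw chain_pos {..<sum_list (map chain_len starts)} (SIGMA t:chain_starts. {..<chain_len t})"
proof -
  have "bij_betw chain_pos {..<sum_list (map chain_len starts)} (SIGMA t:set starts. {..<chain_len t})"
    unfolding chain_pos_def by (rule bij_betw_chain_index) (simp add: starts_def)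
  then show ?thesis
    by (simp only: set_starts)
qed

lemma sum_chain_len: "sum_list (map chain_len starts) = m"
  using bij_betw_same_card[OF bij_betw_chain_pos_sum] bij_betw_same_card[OF bij_betw_pivot_iter]
  by simp

lemma bij_betw_chain_pos: "bij_betw chain_pos {..<m} (SIGMA t:chain_starts. {..<chain_len t})"
  using bij_betw_chain_pos_sum by (simp only: sum_chain_len)

lemma bij_betw_pivot_row: "bij_betw pivot_row {..<m} {..<m}"
proof -
  have "pivot_row = (\<lambda>(t, k). (p ^^ k) t) \<circ> chain_pos"
    unfolding pivot_row_def by auto
  then show ?thesis
    using bij_betw_trans[OF bij_betw_chain_pos bij_betw_pivot_iter] by simp
qed

lemma chain_pos_mem: "c < m \<Longrightarrow> chain_pos c = (t, k) \<Longrightarrow> t < m \<and> k < chain_len t"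
  using bij_betw_apply[OF bij_betw_chain_pos, of c] by (auto simp: chain_starts_def)

definition S :: "'a mat" where
  "S = mat m m (\<lambda>(i, c). (case chain_pos c of (t, k) \<Rightarrow> chain_vec t k) $ i)"

definition J :: "'a mat" where
  "J = jordan_matrix (map (\<lambda>t. (chain_len t, 0)) starts)"

lemma S_carrier: "S \<in> carrier_mat m m"
  unfolding S_def by simp

lemma dim_S: "dim_row S = m" "dim_col S = m"
  unfolding S_def by simp_all

lemma dim_J: "dim_row J = m" "dim_col J = m"
  unfolding J_def jordan_matrix_dim map_map comp_def fst_conv by (simp_all only: sum_chain_len)

lemma J_carrier: "J \<in> carrier_mat m m"
  by (rule carrier_matI[OF dim_J])

lemma col_S: "c < m \<Longrightarrow> chain_pos c = (t, k) \<Longrightarrow> col S c = chain_vec t k"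
  unfolding S_def by (intro eq_vecI) auto

lemma mult_S: "B * S = S * J"
proof (rule eq_matI)
  fix i c assume "i < dim_row (S * J)" "c < dim_col (S * J)"
  then have i: "i < m" and c: "c < m"
    using S_carrier J_carrier by auto
  obtain t k where tk: "chain_pos c = (t, k)" by fastforce
  have t: "t < m" "k < chain_len t"
    using chain_pos_mem[OF c tk] by auto
  have lhs: "(B * S) $$ (i,c) = chain_vec t (Suc k) $ i"
    using carrier S_carrier i c col_S[OF c tk] by simp
  have J: "J $$ (c',c) = (if Suc c' = c \<and> Suc k < chain_len t then 1 else 0)" if "c' < m" for c'
    using index_jordan_matrix_chain_index[of c' chain_len starts c] that c tk
    unfolding J_def chain_pos_def sum_chain_len by simp
  have rhs: "(S * J) $$ (i,c) =
      (\<Sum>c'\<in>{0..<m}. S $$ (i,c') * (if Suc c' = c \<and> Suc k < chain_len t then 1 else 0))"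
    using i c J by (simp add: scalar_prod_def dim_S dim_J)
  show "(B * S) $$ (i,c) = (S * J) $$ (i,c)"
  proof (cases "Suc k < chain_len t")
    case False
    then have "Suc k = chain_len t"
      using t by simp
    then show ?thesis
      using lhs rhs False chain_vec_chain_len[OF t(1)] i by simp
  next
    case True
    then have pred: "0 < c" "chain_pos (c - 1) = (t, Suc k)"
      using chain_index_Suc[of c chain_len starts t k] c tk sum_chain_len
      unfolding chain_pos_def by auto
    have "(S * J) $$ (i,c) = (\<Sum>c'\<in>{0..<m}. if c' = c - 1 then S $$ (i, c - 1) else 0)"
      unfolding rhs using True pred by (intro sum.cong) auto
    also have "\<dots> = chain_vec t (Suc k) $ i"
      using pred i c unfolding S_def by simp
    finally show ?thesis
      using lhs by simp
  qed
qed (use S_carrier J_carrier carrier in auto)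

lemma S_pivot_row:
  assumes "c < m"
  shows "S $$ (pivot_row c, c) = 1" and "\<And>i. pivot_row c < i \<Longrightarrow> i < m \<Longrightarrow> S $$ (i,c) = 0"
proof -
  obtain t k where tk: "chain_pos c = (t, k)" by fastforce
  have piv: "unit_pivot (chain_vec t k) ((p ^^ k) t)"
    using chain_pos_mem[OF assms tk] by (intro unit_pivot_chain_vec) auto
  have "pivot_row c < m"
    using bij_betw_apply[OF bij_betw_pivot_row] assms by simp
  then show "S $$ (pivot_row c, c) = 1" and "\<And>i. pivot_row c < i \<Longrightarrow> i < m \<Longrightarrow> S $$ (i,c) = 0"
    using piv assms tk unfolding S_def pivot_row_def unit_pivot_def by auto
qed

definition pivot_col :: "nat \<Rightarrow> nat" where
  "pivot_col = inv_into {..<m} pivot_row"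

lemma pivot_col_pivot_row:
  "\<rho> < m \<Longrightarrow> pivot_col \<rho> < m" "\<rho> < m \<Longrightarrow> pivot_row (pivot_col \<rho>) = \<rho>"
  "c < m \<Longrightarrow> pivot_col (pivot_row c) = c"
  unfolding pivot_col_def
  using bij_betw_apply[OF bij_betw_inv_into[OF bij_betw_pivot_row]]
    bij_betw_inv_into_left[OF bij_betw_pivot_row] bij_betw_inv_into_right[OF bij_betw_pivot_row]
  by auto

(* Permuting the columns of S so that every pivot lands on the diagonal gives a unit upper
   triangular matrix T; with N = 1 - T, the inverse of T is 1 + N + ... + N^(m-1). *)
definition T :: "'a mat" where
  "T = mat m m (\<lambda>(i, \<rho>). S $$ (i, pivot_col \<rho>))"

definition Sinv :: "'a mat" where
  "Sinv = mat m m (\<lambda>(c, i). geom_sum_mat m (1\<^sub>m m - T) m $$ (pivot_row c, i))"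

lemma T_carrier: "T \<in> carrier_mat m m"
  unfolding T_def by simp

lemma one_minus_T_upper: "j \<le> i \<Longrightarrow> i < m \<Longrightarrow> (1\<^sub>m m - T) $$ (i,j) = 0"
  using S_pivot_row[of "pivot_col j"] pivot_col_pivot_row[of j]
  by (cases "i = j") (auto simp: T_def)

lemma S_Sinv: "S * Sinv = 1\<^sub>m m"
proof -
  let ?N = "1\<^sub>m m - T"
  have N: "?N \<in> carrier_mat m m"
    by (rule minus_carrier_mat[OF T_carrier])
  have T: "T = 1\<^sub>m m - ?N"
    using T_carrier by (intro eq_matI) auto
  have TG: "T * geom_sum_mat m ?N m = 1\<^sub>m m"
    using mult_geom_sum_mat[OF N, of m] strictly_upper_triangular_nilpotent[OF N one_minus_T_upper]
    by (subst T) (auto intro!: eq_matI)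
  show ?thesis
  proof (rule eq_matI)
    fix i i' assume i: "i < dim_row (1\<^sub>m m :: 'a mat)" and i': "i' < dim_col (1\<^sub>m m :: 'a mat)"
    have "(S * Sinv) $$ (i,i') = (\<Sum>c\<in>{..<m}. T $$ (i, pivot_row c) * geom_sum_mat m ?N m $$ (pivot_row c, i'))"
      using i i' S_carrier pivot_col_pivot_row bij_betw_apply[OF bij_betw_pivot_row]
      by (auto simp: scalar_prod_def Sinv_def T_def atLeast0LessThan intro!: sum.cong)
    also have "\<dots> = (\<Sum>\<rho>\<in>{..<m}. T $$ (i, \<rho>) * geom_sum_mat m ?N m $$ (\<rho>, i'))"
      by (rule sum.reindex_bij_betw[OF bij_betw_pivot_row])
    also have "\<dots> = (T * geom_sum_mat m ?N m) $$ (i,i')"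
      using i i' T_carrier carrier_matD[OF geom_sum_mat_carrier[OF N]]
      by (simp add: scalar_prod_def atLeast0LessThan)
    finally show "(S * Sinv) $$ (i,i') = 1\<^sub>m m $$ (i,i')"
      unfolding TG .
  qed (use S_carrier in \<open>auto simp: Sinv_def\<close>)
qed

lemma similar_mat_wit_S: "similar_mat_wit B J S Sinv"
proof -
  have Sinv: "Sinv \<in> carrier_mat m m"
    unfolding Sinv_def by simp
  have Sinv_S: "Sinv * S = 1\<^sub>m m"
    by (rule mat_mult_left_right_inverse[OF S_carrier Sinv S_Sinv])
  have "B = B * (S * Sinv)"
    using carrier by (simp add: S_Sinv)
  also have "\<dots> = S * J * Sinv"
    using carrier S_carrier Sinv by (simp add: mult_S flip: assoc_mult_mat)
  finally show ?thesis
    using carrier S_carrier Sinv J_carrier S_Sinv Sinv_S by (intro similar_mat_witI) auto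
qed

end

locale normed_nilpotent_echelon = nilpotent_echelon B m z p
  for B :: "'a::real_normed_field mat" and m z p +
  fixes a :: real
  assumes norm_entry_le: "\<And>i j. i < m \<Longrightarrow> j < m \<Longrightarrow> norm (B $$ (i,j)) \<le> a"
begin

lemma entry_bound_nonneg: "i < m \<Longrightarrow> 0 \<le> a"
  using order_trans[OF norm_ge_zero norm_entry_le] by blast

lemma norm_chain_vec_le:
  assumes "t < m" "i < m"
  shows "norm (chain_vec t k $ i) \<le> (1 + real m * a) ^ k"
  using assms(2)
proof (induct k arbitrary: i)
  case 0
  then show ?case using assms(1) by simp
next
  case (Suc k)
  have "0 \<le> a"
    using entry_bound_nonneg[OF Suc.prems] .
  have "chain_vec t k \<in> carrier_vec m"
    by (rule carrier_vecI[OF dim_chain_vec])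
  from norm_mult_mat_vec_index_le[OF carrier this Suc.prems norm_entry_le Suc.hyps]
  have "norm ((B *\<^sub>v chain_vec t k) $ i) \<le> real m * (a * (1 + real m * a) ^ k)" .
  also have "\<dots> \<le> (1 + real m * a) ^ k + real m * a * (1 + real m * a) ^ k"
    using \<open>0 \<le> a\<close> by simp
  also have "\<dots> = (1 + real m * a) ^ Suc k"
    by (simp add: distrib_right)
  finally show ?case by simp
qed

lemma norm_S_le:
  assumes "i < m" "c < m"
  shows "norm (S $$ (i,c)) \<le> (1 + real m * a) ^ (m - 1)"
proof -
  obtain t k where tk: "chain_pos c = (t, k)" by fastforce
  have t: "t < m" "k < chain_len t"
    using chain_pos_mem[OF assms(2) tk] by auto
  have "0 \<le> a"
    using entry_bound_nonneg[OF assms(1)] .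
  have "norm (S $$ (i,c)) = norm (chain_vec t k $ i)"
    using assms tk unfolding S_def by simp
  also have "\<dots> \<le> (1 + real m * a) ^ k"
    by (rule norm_chain_vec_le[OF t(1) assms(1)])
  also have "\<dots> \<le> (1 + real m * a) ^ (m - 1)"
    using pivot_iter_le[OF t] t(1) \<open>0 \<le> a\<close> by (intro power_increasing) auto
  finally show ?thesis .
qed

lemma norm_Sinv_le:
  assumes "c < m" "i < m"
  shows "norm (Sinv $$ (c,i)) \<le> (1 + real m * (1 + real m * a) ^ (m - 1)) ^ m"
proof -
  let ?b = "(1 + real m * a) ^ (m - 1)"
  have "0 \<le> a"
    using entry_bound_nonneg[OF assms(2)] .
  have N: "norm ((1\<^sub>m m - T) $$ (i',j')) \<le> ?b" if "i' < m" "j' < m" for i' j'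
  proof (cases "j' \<le> i'")
    case True
    then show ?thesis using one_minus_T_upper[OF True that(1)] \<open>0 \<le> a\<close> by simp
  next
    case False
    then have "norm ((1\<^sub>m m - T) $$ (i',j')) = norm (S $$ (i', pivot_col j'))"
      using that by (simp add: T_def)
    also have "\<dots> \<le> ?b"
      using that pivot_col_pivot_row by (intro norm_S_le) auto
    finally show ?thesis .
  qed
  have "norm (Sinv $$ (c,i)) = norm (geom_sum_mat m (1\<^sub>m m - T) m $$ (pivot_row c, i))"
    using assms unfolding Sinv_def by simp
  also have "\<dots> \<le> (1 + real m * ?b) ^ m"
    using bij_betw_apply[OF bij_betw_pivot_row] assms \<open>0 \<le> a\<close>
    by (intro norm_geom_sum_mat_index_le[OF minus_carrier_mat[OF T_carrier] N]) auto
  finally show ?thesis .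
qed

end

section \<open>Nilpotent matrices in reduced column echelon form\<close>

lemma col_len_props:
  assumes "nonzero_col B j"
  shows "col_len B j < dim_row B" "B $$ (col_len B j, j) \<noteq> 0"
    "\<And>i. col_len B j < i \<Longrightarrow> i < dim_row B \<Longrightarrow> B $$ (i,j) = 0"
proof -
  obtain i0 where i0: "i0 < dim_row B" "B $$ (i0,j) \<noteq> 0"
    using assms unfolding nonzero_col_def by auto
  let ?P = "\<lambda>i. i < dim_row B \<and> B $$ (i,j) \<noteq> 0"
  have "?P (col_len B j)"
    unfolding col_len_def by (rule GreatestI_nat[of ?P i0 "dim_row B"]) (use i0 in auto)
  then show "col_len B j < dim_row B" "B $$ (col_len B j, j) \<noteq> 0" by auto
  show "B $$ (i,j) = 0" if "col_len B j < i" "i < dim_row B" for i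
  proof (rule ccontr)
    assume "B $$ (i,j) \<noteq> 0"
    then have "i \<le> col_len B j"
      unfolding col_len_def by (intro Greatest_le_nat[of ?P i "dim_row B"]) (use that in auto)
    then show False using that by simp
  qed
qed

lemma row_pow_mat_unit:
  fixes B :: "'a::semiring_1 mat"
  assumes B: "B \<in> carrier_mat n n" and i: "i < n" and row: "row B i = unit_vec n i"
  shows "row (B ^\<^sub>m k) i = unit_vec n i"
proof (induct k)
  case 0
  then show ?case using B i by simp
next
  case (Suc k)
  show ?case
  proof (rule eq_vecI)
    fix j assume "j < dim_vec (unit_vec n i :: 'a vec)"
    then have j: "j < n" by simp
    have "row (B ^\<^sub>m Suc k) i $ j = row (B ^\<^sub>m k) i \<bullet> col B j"
      using B i j by simp
    also have "\<dots> = row B i $ j"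
      using Suc B i j by simp
    also have "\<dots> = unit_vec n i $ j"
      by (simp only: row)
    finally show "row (B ^\<^sub>m Suc k) i $ j = unit_vec n i $ j" .
  qed (use B in simp)
qed

lemma nilpotent_diag_neq_one:
  fixes B :: "'a::semiring_1 mat"
  assumes B: "B \<in> carrier_mat n n" and nil: "B ^\<^sub>m k = 0\<^sub>m n n" and i: "i < n"
    and row_zero: "\<And>l. l < n \<Longrightarrow> l \<noteq> i \<Longrightarrow> B $$ (i,l) = 0"
  shows "B $$ (i,i) \<noteq> 1"
proof
  assume "B $$ (i,i) = 1"
  then have "row B i = unit_vec n i"
    using B i row_zero by (intro eq_vecI) auto
  then have "row (B ^\<^sub>m k) i $ i = 1"
    using row_pow_mat_unit[OF B i] i by simp
  moreover have "row (B ^\<^sub>m k) i $ i = 0"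
    using nil i by simp
  ultimately show False
    by simp
qed

lemma strict_mono_on_add_le:
  fixes f :: "nat \<Rightarrow> nat"
  assumes mono: "\<And>j j'. z \<le> j \<Longrightarrow> j < j' \<Longrightarrow> j' < m \<Longrightarrow> f j < f j'"
    and "z \<le> j" "j + d < m"
  shows "f j + d \<le> f (j + d)"
  using assms(3)
proof (induct d)
  case (Suc d)
  then show ?case
    using mono[of "j + d" "j + Suc d"] \<open>z \<le> j\<close> by auto
qed simp

lemma reduced_col_echelon_pivots:
  fixes B :: "'a::{zero,one} mat"
  assumes B: "B \<in> carrier_mat m m" and rce: "reduced_col_echelon B"
  obtains z where "\<And>i j. j < z \<Longrightarrow> i < m \<Longrightarrow> B $$ (i,j) = 0"
    and "\<And>j. z \<le> j \<Longrightarrow> j < m \<Longrightarrow> col_len B j < m"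
    and "\<And>i j. z \<le> j \<Longrightarrow> j < m \<Longrightarrow> col_len B j < i \<Longrightarrow> i < m \<Longrightarrow> B $$ (i,j) = 0"
    and "\<And>j. z \<le> j \<Longrightarrow> j < m \<Longrightarrow> B $$ (col_len B j, j) = 1"
    and "\<And>j j'. z \<le> j \<Longrightarrow> j < j' \<Longrightarrow> j' < m \<Longrightarrow> col_len B j < col_len B j'"
proof -
  have dims: "dim_row B = m" "dim_col B = m"
    using B by auto
  obtain z where zero: "\<forall>j<z. \<not> nonzero_col B j"
    and nonzero: "\<forall>j. z \<le> j \<and> j < m \<longrightarrow> nonzero_col B j"
    and mono: "\<forall>j j'. z \<le> j \<and> j < j' \<and> j' < m \<longrightarrow> col_len B j < col_len B j'"
    using rce unfolding reduced_col_echelon_def col_echelon_def dims by auto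
  show thesis
  proof (rule that[of z])
    show "B $$ (i,j) = 0" if "j < z" "i < m" for i j
      using zero that unfolding nonzero_col_def dims by auto
    show "col_len B j < m" if "z \<le> j" "j < m" for j
      using col_len_props(1)[of B j] nonzero that unfolding dims by auto
    show "B $$ (i,j) = 0" if "z \<le> j" "j < m" "col_len B j < i" "i < m" for i j
      using col_len_props(3)[of B j i] nonzero that unfolding dims by auto
    show "B $$ (col_len B j, j) = 1" if "z \<le> j" "j < m" for j
      using rce nonzero that unfolding reduced_col_echelon_def dims by auto
    show "col_len B j < col_len B j'" if "z \<le> j" "j < j'" "j' < m" for j j'
      using mono that by blast
  qed
qed

lemma nilpotent_echelon_col_len:
  fixes B :: "'a::field mat"
  assumes B: "B \<in> carrier_mat m m" and rce: "reduced_col_echelon B" and nil: "B ^\<^sub>m k = 0\<^sub>m m m"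
  obtains z where "nilpotent_echelon B m z (col_len B)"
proof -
  obtain z where zero_col: "\<And>i j. j < z \<Longrightarrow> i < m \<Longrightarrow> B $$ (i,j) = 0"
    and p_less: "\<And>j. z \<le> j \<Longrightarrow> j < m \<Longrightarrow> col_len B j < m"
    and below: "\<And>i j. z \<le> j \<Longrightarrow> j < m \<Longrightarrow> col_len B j < i \<Longrightarrow> i < m \<Longrightarrow> B $$ (i,j) = 0"
    and one: "\<And>j. z \<le> j \<Longrightarrow> j < m \<Longrightarrow> B $$ (col_len B j, j) = 1"
    and mono: "\<And>j j'. z \<le> j \<Longrightarrow> j < j' \<Longrightarrow> j' < m \<Longrightarrow> col_len B j < col_len B j'"
    using reduced_col_echelon_pivots[OF B rce] by blast
  let ?p = "col_len B"
  have le: "?p j \<le> j" and last: "?p j = j \<Longrightarrow> ?p (m - 1) = m - 1" if "z \<le> j" "j < m" for j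
  proof -
    have "?p (m - 1) < m"
      by (rule p_less) (use that in auto)
    moreover have "?p j + (m - 1 - j) \<le> ?p (m - 1)"
      using strict_mono_on_add_le[where f = "col_len B" and z = z and m = m and d = "m - 1 - j",
          OF mono that(1)] that by simp
    ultimately show "?p j \<le> j" "?p j = j \<Longrightarrow> ?p (m - 1) = m - 1"
      by linarith+
  qed
  \<comment> \<open>Otherwise the last row of B would be a unit row.\<close>
  have "?p j \<noteq> j" if j: "z \<le> j" "j < m" for j
  proof
    assume "?p j = j"
    then have m1: "?p (m - 1) = m - 1" "z \<le> m - 1" "m - 1 < m"
      using last[OF j] j by auto
    have "B $$ (m - 1, l) = 0" if "l < m" "l \<noteq> m - 1" for l
    proof (cases "l < z")
      case False
      then have "?p l \<le> l"
        using that by (intro le) auto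
      then show ?thesis
        using below[of l "m - 1"] False that by simp
    qed (use zero_col that m1 in auto)
    then show False
      using nilpotent_diag_neq_one[OF B nil m1(3)] one[OF m1(2,3)] m1(1) by simp
  qed
  then have less: "?p j < j" if "z \<le> j" "j < m" for j
    using le that by (simp add: le_neq_implies_less)
  show thesis
    by (rule that[of z], unfold_locales) (fact B zero_col less one below mono)+
qed

lemma nilpotent_reduced_col_echelon_jordan:
  fixes B :: "'a::real_normed_field mat"
  assumes B: "B \<in> carrier_mat m m" "reduced_col_echelon B" "B ^\<^sub>m k = 0\<^sub>m m m"
    and a: "\<And>i j. i < m \<Longrightarrow> j < m \<Longrightarrow> norm (B $$ (i,j)) \<le> a"
  shows "\<exists>S Q js. similar_mat_wit B (jordan_matrix js) S Q \<and>
    (\<forall>x\<in>elements_mat S. norm x \<le> (1 + real m * a) ^ (m - 1)) \<and>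
    (\<forall>x\<in>elements_mat Q. norm x \<le> (1 + real m * (1 + real m * a) ^ (m - 1)) ^ m)"
proof -
  obtain z where "nilpotent_echelon B m z (col_len B)"
    using nilpotent_echelon_col_len[OF B] .
  then interpret normed_nilpotent_echelon B m z "col_len B" a
    using a by (simp add: normed_nilpotent_echelon_def normed_nilpotent_echelon_axioms_def)
  have Sinv: "Sinv \<in> carrier_mat m m"
    unfolding Sinv_def by simp
  show ?thesis
  proof (intro exI conjI ballI)
    show "similar_mat_wit B (jordan_matrix (map (\<lambda>t. (chain_len t, 0)) starts)) S Sinv"
      using similar_mat_wit_S unfolding J_def .
    show "norm x \<le> (1 + real m * a) ^ (m - 1)" if "x \<in> elements_mat S" for x
      using that norm_S_le dim_S by auto
    show "norm x \<le> (1 + real m * (1 + real m * a) ^ (m - 1)) ^ m" if "x \<in> elements_mat Sinv" for x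
      using that norm_Sinv_le Sinv by auto
  qed
qed

section \<open>The estimate for block diagonal matrices\<close>

lemma mult_pred_le_fact: "n * (n - 1) \<le> fact n"
proof (cases n)
  case (Suc k)
  have "Suc k * k \<le> Suc k * fact k"
    using fact_ge_self[of k] by (intro mult_le_mono2) simp
  then show ?thesis using Suc by simp
qed simp

lemma one_plus_mult_pow_le:
  fixes a :: real
  assumes "m \<le> n" "0 \<le> a"
  shows "(1 + real m * a) ^ j \<le> (1 + real n) ^ j * (1 + a) ^ j"
proof -
  have "real m * a \<le> real n * a"
    using assms by (intro mult_right_mono) auto
  then have "1 + real m * a \<le> (1 + real n) * (1 + a)"
    using assms by (simp add: algebra_simps)
  then show ?thesis
    using assms by (simp add: power_mono flip: power_mult_distrib)
qed

lemma similarity_bound_le: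
  fixes a :: real
  assumes mn: "m \<le> n" and a: "0 \<le> a"
  shows "(1 + real m * a) ^ (m - 1) \<le> (1 + real n) ^ (n * n) * (1 + a) ^ fact n"
proof -
  have "m - 1 \<le> n * n" "m - 1 \<le> fact n"
    using mn le_square[of n] fact_ge_self[of n] by linarith+
  then have "(1 + real n) ^ (m - 1) * (1 + a) ^ (m - 1) \<le> (1 + real n) ^ (n * n) * (1 + a) ^ fact n"
    using a by (intro mult_mono power_increasing) auto
  with one_plus_mult_pow_le[OF assms] show ?thesis
    by (rule order_trans)
qed

lemma inverse_similarity_bound_le:
  fixes a :: real
  assumes mn: "m \<le> n" and a: "0 \<le> a"
  shows "(1 + real m * (1 + real m * a) ^ (m - 1)) ^ m \<le> (1 + real n) ^ (n * n) * (1 + a) ^ fact n"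
proof -
  let ?X = "1 + real m * a" and ?Y = "1 + real n" and ?Z = "1 + a"
  have X: "1 \<le> ?X ^ (m - 1)"
    using a by simp
  have "1 + real m * ?X ^ (m - 1) \<le> (1 + real m) * ?X ^ (m - 1)"
    using X by (simp add: algebra_simps)
  also have "\<dots> \<le> ?Y * ?X ^ (m - 1)"
    using mn X by (intro mult_right_mono) auto
  finally have "(1 + real m * ?X ^ (m - 1)) ^ m \<le> (?Y * ?X ^ (m - 1)) ^ m"
    by (rule power_mono) (use X in \<open>auto intro!: add_nonneg_nonneg mult_nonneg_nonneg\<close>)
  also have "\<dots> = ?Y ^ m * ?X ^ ((m - 1) * m)"
    by (simp add: power_mult_distrib power_mult)
  also have "\<dots> \<le> ?Y ^ m * (?Y ^ ((m - 1) * m) * ?Z ^ ((m - 1) * m))"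
    using one_plus_mult_pow_le[OF assms] by (intro mult_left_mono) auto
  also have "\<dots> = ?Y ^ (m * m) * ?Z ^ ((m - 1) * m)"
    by (cases m) (simp_all add: power_add algebra_simps)
  also have "\<dots> \<le> ?Y ^ (n * n) * ?Z ^ fact n"
  proof -
    have "(m - 1) * m \<le> n * (n - 1)"
      using mn by (subst mult.commute) (intro mult_le_mono; simp)
    then have "(m - 1) * m \<le> fact n"
      using mult_pred_le_fact[of n] by linarith
    moreover have "m * m \<le> n * n"
      using mn by (intro mult_le_mono) auto
    ultimately show ?thesis
      using a mn by (intro mult_mono power_increasing) auto
  qed
  finally show ?thesis .
qed

lemma pow_diag_block_mat_eq_0_block:
  assumes sq: "Ball (set Bs) square_mat" and nil: "diag_block_mat Bs ^\<^sub>m k = 0\<^sub>m n n"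
    and B: "B \<in> set Bs"
  shows "B ^\<^sub>m k = 0\<^sub>m (dim_row B) (dim_row B)"
proof -
  from sq B have "square_mat B"
    by (rule bspec)
  then have "B \<in> carrier_mat (dim_row B) (dim_row B)"
    by (intro carrier_matI) simp_all
  then have Bk: "B ^\<^sub>m k \<in> carrier_mat (dim_row B) (dim_row B)"
    by (rule pow_carrier_mat)
  have "diag_block_mat (map (\<lambda>A. A ^\<^sub>m k) Bs) = 0\<^sub>m n n"
    using nil unfolding diag_block_pow_mat[OF sq] .
  then have "elements_mat (B ^\<^sub>m k) \<subseteq> elements_mat (0\<^sub>m n n)"
    using elements_mat_subset_diag_block_mat[of "B ^\<^sub>m k" "map (\<lambda>A. A ^\<^sub>m k) Bs"] B
    by (simp only: set_map image_eqI)
  then have zero: "elements_mat (B ^\<^sub>m k) \<subseteq> {0}"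
    using elements_0_mat by (rule subset_trans)
  show ?thesis
  proof (rule eq_matI)
    fix i j assume ij: "i < dim_row (0\<^sub>m (dim_row B) (dim_row B) :: 'a mat)"
      "j < dim_col (0\<^sub>m (dim_row B) (dim_row B) :: 'a mat)"
    then have "(B ^\<^sub>m k) $$ (i,j) \<in> elements_mat (B ^\<^sub>m k)"
      by (intro elements_matI[OF Bk, of i j]) auto
    then show "(B ^\<^sub>m k) $$ (i,j) = 0\<^sub>m (dim_row B) (dim_row B) $$ (i,j)"
      using zero ij by auto
  qed (use Bk in auto)
qed

lemma norm_block_index_le_opnorm:
  assumes A: "diag_block_mat Bs \<in> carrier_mat n n" and B: "B \<in> set Bs"
    and ij: "i < dim_row B" "j < dim_col B"
  shows "cmod (B $$ (i,j)) \<le> opnorm (diag_block_mat Bs)"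
proof -
  have "B $$ (i,j) \<in> elements_mat B"
    using ij by (intro elements_matI[of B "dim_row B" "dim_col B" i j]) auto
  then have "B $$ (i,j) \<in> elements_mat (diag_block_mat Bs)"
    using elements_mat_subset_diag_block_mat[OF B] by (rule rev_subsetD)
  then obtain i' j' where "i' < n" "j' < n" "B $$ (i,j) = diag_block_mat Bs $$ (i',j')"
    using A by (auto dest!: elements_matD)
  then show ?thesis
    using norm_index_le_opnorm[OF A] by simp
qed

lemma norm_elements_diag_block_mat_le:
  fixes As :: "'a::real_normed_vector mat list"
  assumes "0 \<le> E" and "\<And>A x. A \<in> set As \<Longrightarrow> x \<in> elements_mat A \<Longrightarrow> norm x \<le> E"
    and "x \<in> elements_mat (diag_block_mat As)"
  shows "norm x \<le> E"
proof -
  have "x = 0 \<or> (\<exists>A\<in>set As. x \<in> elements_mat A)"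
    using elements_diag_block_mat[of As] assms(3) by auto
  then show ?thesis
    using assms(1,2) by auto
qed

lemma similar_diag_block_mat_jordan:
  fixes Bs :: "'a::real_normed_field mat list"
  assumes E: "0 \<le> E"
    and blocks: "\<And>B. B \<in> set Bs \<Longrightarrow> \<exists>S Q js. similar_mat_wit B (jordan_matrix js) S Q \<and>
      (\<forall>x\<in>elements_mat S. norm x \<le> E) \<and> (\<forall>x\<in>elements_mat Q. norm x \<le> E)"
  shows "\<exists>Ss Q js. length Ss = length Bs \<and>
      (\<forall>k<length Bs. Ss ! k \<in> carrier_mat (dim_row (Bs ! k)) (dim_row (Bs ! k))) \<and>
      similar_mat_wit (diag_block_mat Bs) (jordan_matrix js) (diag_block_mat Ss) Q \<and>
      (\<forall>x\<in>elements_mat (diag_block_mat Ss). norm x \<le> E) \<and> (\<forall>x\<in>elements_mat Q. norm x \<le> E)"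
proof -
  obtain P Q js where wit: "\<And>B. B \<in> set Bs \<Longrightarrow> similar_mat_wit B (jordan_matrix (js B)) (P B) (Q B)"
    and P: "\<And>A x. A \<in> set (map P Bs) \<Longrightarrow> x \<in> elements_mat A \<Longrightarrow> norm x \<le> E"
    and Q: "\<And>A x. A \<in> set (map Q Bs) \<Longrightarrow> x \<in> elements_mat A \<Longrightarrow> norm x \<le> E"
    using blocks by (simp only: set_map image_iff) metis
  have "similar_mat_wit (diag_block_mat Bs) (jordan_matrix (concat (map js Bs)))
      (diag_block_mat (map P Bs)) (diag_block_mat (map Q Bs))"
    using similar_mat_wit_diag_block_mat[of Bs "\<lambda>B. jordan_matrix (js B)" P Q] wit
    by (simp add: jordan_matrix_concat_diag_block_mat comp_def)
  moreover have "\<forall>x\<in>elements_mat (diag_block_mat (map P Bs)). norm x \<le> E"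
    using norm_elements_diag_block_mat_le[of E "map P Bs"] E P by blast
  moreover have "\<forall>x\<in>elements_mat (diag_block_mat (map Q Bs)). norm x \<le> E"
    using norm_elements_diag_block_mat_le[of E "map Q Bs"] E Q by blast
  moreover have "\<forall>k<length Bs. map P Bs ! k \<in> carrier_mat (dim_row (Bs ! k)) (dim_row (Bs ! k))"
    using similar_mat_witD(6)[OF refl wit] by simp
  ultimately show ?thesis
    by (intro exI[of _ "map P Bs"] exI[of _ "diag_block_mat (map Q Bs)"]
        exI[of _ "concat (map js Bs)"] conjI) auto
qed

lemma diag_block_jordan_bounded:
  fixes Bs :: "complex mat list"
  assumes blocks: "\<forall>B\<in>set Bs. square_mat B \<and> reduced_col_echelon B"
    and A: "diag_block_mat Bs \<in> carrier_mat n n" and k: "diag_block_mat Bs ^\<^sub>m k = 0\<^sub>m n n"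
    and B: "B \<in> set Bs"
  shows "\<exists>S Q js. similar_mat_wit B (jordan_matrix js) S Q \<and>
    (\<forall>x\<in>elements_mat S. cmod x \<le> (1 + real n) ^ (n * n) * (1 + opnorm (diag_block_mat Bs)) ^ fact n) \<and>
    (\<forall>x\<in>elements_mat Q. cmod x \<le> (1 + real n) ^ (n * n) * (1 + opnorm (diag_block_mat Bs)) ^ fact n)"
proof -
  define m where "m = dim_row B"
  define a where "a = opnorm (diag_block_mat Bs)"
  have a: "0 \<le> a"
    unfolding a_def by (rule opnorm_nonneg[OF A])
  have Bc: "B \<in> carrier_mat m m"
    using blocks B unfolding m_def by (intro carrier_matI) auto
  have "m \<le> n"
    using A B member_le_sum_list[of m "map dim_row Bs"] unfolding m_def
    by (auto simp: dim_diag_block_mat)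
  have "cmod (B $$ (i,j)) \<le> a" if "i < m" "j < m" for i j
    using norm_block_index_le_opnorm[OF A B] that Bc unfolding a_def by auto
  moreover have "reduced_col_echelon B" and "B ^\<^sub>m k = 0\<^sub>m m m"
    using blocks B pow_diag_block_mat_eq_0_block[OF _ k B] unfolding m_def by auto
  ultimately obtain S Q js where wit: "similar_mat_wit B (jordan_matrix js) S Q"
    and S: "\<forall>x\<in>elements_mat S. cmod x \<le> (1 + real m * a) ^ (m - 1)"
    and Q: "\<forall>x\<in>elements_mat Q. cmod x \<le> (1 + real m * (1 + real m * a) ^ (m - 1)) ^ m"
    using nilpotent_reduced_col_echelon_jordan[OF Bc] by blast
  show ?thesis
    unfolding a_def[symmetric]
  proof (intro exI conjI ballI)
    show "similar_mat_wit B (jordan_matrix js) S Q" by (fact wit)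
    show "cmod x \<le> (1 + real n) ^ (n * n) * (1 + a) ^ fact n" if "x \<in> elements_mat S" for x
      using S that similarity_bound_le[OF \<open>m \<le> n\<close> a] by fastforce
    show "cmod x \<le> (1 + real n) ^ (n * n) * (1 + a) ^ fact n" if "x \<in> elements_mat Q" for x
      using Q that inverse_similarity_bound_le[OF \<open>m \<le> n\<close> a] by fastforce
  qed
qed

lemma diag_nilpotent_reduced_col_echelon_jordan:
  fixes Bs :: "complex mat list"
  assumes blocks: "\<forall>B\<in>set Bs. square_mat B \<and> reduced_col_echelon B"
    and A: "diag_block_mat Bs \<in> carrier_mat n n" and nil: "nilpotent_mat (diag_block_mat Bs)"
  shows "\<exists>Ss Sinv. length Ss = length Bs \<and>
    (\<forall>k<length Bs. Ss ! k \<in> carrier_mat (dim_row (Bs ! k)) (dim_row (Bs ! k))) \<and>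
    Sinv \<in> carrier_mat n n \<and> diag_block_mat Ss * Sinv = 1\<^sub>m n \<and> Sinv * diag_block_mat Ss = 1\<^sub>m n \<and>
    opnorm (diag_block_mat Ss) \<le> real n * (real n * (1 + real n) ^ (n * n)) * (1 + opnorm (diag_block_mat Bs)) ^ fact n \<and>
    opnorm Sinv \<le> real n * (real n * (1 + real n) ^ (n * n)) * (1 + opnorm (diag_block_mat Bs)) ^ fact n \<and>
    (\<exists>js. Sinv * diag_block_mat Bs * diag_block_mat Ss = jordan_matrix js)"
proof -
  define E where "E = (1 + real n) ^ (n * n) * (1 + opnorm (diag_block_mat Bs)) ^ fact n"
  obtain k where k: "diag_block_mat Bs ^\<^sub>m k = 0\<^sub>m n n"
    using nil A unfolding nilpotent_mat_def by auto
  have "0 \<le> E"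
    unfolding E_def using opnorm_nonneg[OF A] by simp
  then obtain Ss Sinv js where Ss: "length Ss = length Bs"
      "\<forall>k<length Bs. Ss ! k \<in> carrier_mat (dim_row (Bs ! k)) (dim_row (Bs ! k))"
    and wit: "similar_mat_wit (diag_block_mat Bs) (jordan_matrix js) (diag_block_mat Ss) Sinv"
    and bounds: "\<forall>x\<in>elements_mat (diag_block_mat Ss). cmod x \<le> E" "\<forall>x\<in>elements_mat Sinv. cmod x \<le> E"
    using similar_diag_block_mat_jordan[of E Bs] diag_block_jordan_bounded[OF blocks A k]
    unfolding E_def by blast
  note w = similar_mat_witD2[OF A wit]
  have C: "real n * (real n * E) =
      real n * (real n * (1 + real n) ^ (n * n)) * (1 + opnorm (diag_block_mat Bs)) ^ fact n"
    unfolding E_def by (simp add: algebra_simps)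
  have "Sinv * diag_block_mat Bs * diag_block_mat Ss = jordan_matrix js"
    using similar_mat_witD(3)[OF refl similar_mat_wit_sym[OF wit]] by (rule sym)
  then show ?thesis
    using Ss w(1,2,7) opnorm_le[OF w(6) bounds(1)] opnorm_le[OF w(7) bounds(2)]
    unfolding C by blast
qed

theorem proposition6:
  "\<forall>n::nat. \<exists>C::real. \<forall>(Bs :: complex mat list).
     (\<forall>B\<in>set Bs. square_mat B \<and> reduced_col_echelon B) \<longrightarrow>
     (let A = diag_block_mat Bs in
       A \<in> carrier_mat n n \<longrightarrow> nilpotent_mat A \<longrightarrow> A \<noteq> 0\<^sub>m n n \<longrightarrow>
       (\<exists>Ss :: complex mat list. \<exists>Sinv :: complex mat.
          length Ss = length Bs \<and>
          (\<forall>k<length Bs. Ss ! k \<in> carrier_mat (dim_row (Bs ! k)) (dim_row (Bs ! k))) \<and>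
          (let S = diag_block_mat Ss in
            Sinv \<in> carrier_mat n n \<and> S * Sinv = 1\<^sub>m n \<and> Sinv * S = 1\<^sub>m n \<and>
            opnorm S \<le> C * (1 + opnorm A) ^ fact n \<and>
            opnorm Sinv \<le> C * (1 + opnorm A) ^ fact n \<and>
            (\<exists>js :: (nat \<times> complex) list. Sinv * A * S = jordan_matrix js))))"
  unfolding Let_def
  by (rule allI, rule exI, intro allI impI, rule diag_nilpotent_reduced_col_echelon_jordan; assumption)

end
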